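(* Let $(E,[\cdot,\cdot],\rho)$ be a skew algebroid over $M$ and $|\sigma|$ a nowhere-vanishing section of $|L^E|$. Then for every Hamiltonian $H\in C^\infty(E^* )$, $$\bigl(\varphi_{|\sigma|}\bigr)^v(H)=\mathrm{div}_{\widetilde{|\sigma|}}\,\mathcal X_H .$$
   Context: A skew algebroid: a vector bundle $\tau:E\to M$ of rank $n$ over an $m$-dimensional manifold $M$ with a skew-symmetric $\mathbb R$-bilinear bracket $[\cdot,\cdot]$ on sections and an anchor $\rho:E\to TM$ with $[X,fY]=\rho(X)(f)Y+f[X,Y]$ (no Jacobi identity assumed). In a local basis $(e_i)$ of sections with dual basis $(e^i)$, coordinates $(x^a)$ on $M$ and linear coordinates $(x^a,\xi_i)$ on $E^*$: $[e_i,e_j]=c^k_{ij}e_k$, $\rho(e_i)=\rho^a_i\partial_{x^a}$; the structure corresponds to the linear bivector $\Pi=c^k_{ij}\xi_k\partial_{\xi_i}\otimes\partial_{\xi_j}+\rho^b_i\partial_{\xi_i}\wedge\partial_{x^b}$ on $E^*$. The Hamiltonian vector field of $H$ is $\mathcal X_H=i_{dH}\Pi$, locally $\mathcal X_H=\bigl(c^k_{ij}\xi_k\frac{\partial H}{\partial\xi_i}-\rho^a_j\frac{\partial H}{\partial x^a}\bigr)\partial_{\xi_j}+\rho^b_i\frac{\partial H}{\partial\xi_i}\partial_{x^b}$. $L^E=\wedge^nE\otimes\wedge^mT^*M$, $|L^E|=L^E/\mathbb Z_2$. The $E$-connection on $L^E$ is $\nabla_X(Y_1\wedge\dots\wedge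 Y_n\otimes\mu)=\sum_iY_1\wedge\dots\wedge[X,Y_i]\wedge\dots\wedge Y_n\otimes\mu+Y_1\wedge\dots\wedge Y_n\otimes\mathcal L_{\rho(X)}\mu$. The modular form $\varphi_{|\sigma|}\in\mathrm{Sec}(E^* )$ is defined by $\nabla_X\sigma=\langle X,\varphi_{|\sigma|}\rangle\sigma$ for any local representative $\sigma$ of $|\sigma|$ (locally, for $\sigma=e_1\wedge\dots\wedge e_n\otimes dx^1\wedge\dots\wedge dx^m$, $\varphi=(\sum_kc^k_{ik}+\sum_a\partial\rho^a_i/\partial x^a)e^i$). For a section $\alpha=\alpha_i(x)e^i$ of $E^*$, its vertical lift is the vector field $\alpha^v=\alpha_i(x)\partial_{\xi_i}$ on $E^*$. $\widetilde{|\sigma|}$ is the density on $E^*$ given locally, for $\sigma=f\,e_1\wedge\dots\wedge e_n\otimes dx^1\wedge\dots\wedge dx^m$, by $|f(x)|\,|d\xi_1\cdots d\xi_n\,dx^1\cdots dx^m|$. For a nowhere-vanishing density $\Omega$, $\mathrm{div}_\Omega(X)$ is defined by $\mathcal L_X\Omega=\mathrm{div}_\Omega(X)\,\Omega$. *)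

theory Defs
  imports "HOL-Analysis.Analysis"
begin

text \<open>Local-coordinate model of a skew algebroid E over an open chart U of R^m,
  with E trivialised by a basis of sections e_1..e_n indexed by the finite type 'n,
  coordinates x^a on U indexed by the finite type 'm, and linear coordinates xi_i on E^*.
  A point of E^* over U is a pair (x, xi) in U x R^n.\<close>

definition partial :: "'a::euclidean_space \<Rightarrow> ('a \<Rightarrow> real) \<Rightarrow> 'a \<Rightarrow> real" where
  "partial b F p = frechet_derivative F (at p) b"

coinductive smooth_on :: "'a::euclidean_space set \<Rightarrow> ('a \<Rightarrow> real) \<Rightarrow> bool" where
  "open S \<Longrightarrow> F differentiable_on S \<Longrightarrow> (\<forall>b\<in>Basis. smooth_on S (partial b F))
     \<Longrightarrow> smooth_on S F"

definition dx :: "'m::finite \<Rightarrow> ((real^'m) \<times> (real^'n::finite) \<Rightarrow> real) \<Rightarrow> (real^'m) \<times> (real^'n) \<Rightarrow> real" where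
  "dx a F p = partial (axis a 1, 0) F p"

definition dxi :: "'n::finite \<Rightarrow> ((real^'m::finite) \<times> (real^'n) \<Rightarrow> real) \<Rightarrow> (real^'m) \<times> (real^'n) \<Rightarrow> real" where
  "dxi i F p = partial (0, axis i 1) F p"

definition dU :: "'m::finite \<Rightarrow> (real^'m \<Rightarrow> real) \<Rightarrow> real^'m \<Rightarrow> real" where
  "dU a g x = partial (axis a 1) g x"

text \<open>Structure functions: c k i j x = c^k_ij(x), rho i a x = rho^a_i(x).
  Hamiltonian vector field X_H = i_{dH} Pi, as a vector field (tangent vector in
  coordinates (x, xi)) on E^*:
  X_H = (c^k_ij xi_k dH/dxi_i - rho^a_j dH/dx^a) d/dxi_j + rho^b_i dH/dxi_i d/dx^b.\<close>
definition ham_vf ::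
  "('n::finite \<Rightarrow> 'n \<Rightarrow> 'n \<Rightarrow> real^'m::finite \<Rightarrow> real) \<Rightarrow> ('n \<Rightarrow> 'm \<Rightarrow> real^'m \<Rightarrow> real)
   \<Rightarrow> ((real^'m) \<times> (real^'n) \<Rightarrow> real) \<Rightarrow> (real^'m) \<times> (real^'n) \<Rightarrow> (real^'m) \<times> (real^'n)" where
  "ham_vf c rho H p =
    ((\<chi> b. \<Sum>i\<in>UNIV. rho i b (fst p) * dxi i H p),
     (\<chi> j. (\<Sum>i\<in>UNIV. \<Sum>k\<in>UNIV. c k i j (fst p) * (snd p $ k) * dxi i H p)
            - (\<Sum>a\<in>UNIV. rho j a (fst p) * dx a H p)))"

text \<open>The E-connection on L^E in the local trivialisation sigma_0 = e_1 ^...^ e_n (x) dx^1 ^...^ dx^m: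
  nabla_{e_i}(g sigma_0) = (rho(e_i) g) sigma_0 + g (sum_k c^k_ik + sum_a d rho^a_i / dx^a) sigma_0,
  obtained from the definition via [e_i,e_k] = c^l_ik e_l and L_{rho(e_i)} dx = (div rho(e_i)) dx.
  The coefficient of sigma_0 is returned.\<close>
definition conn ::
  "('n::finite \<Rightarrow> 'n \<Rightarrow> 'n \<Rightarrow> real^'m::finite \<Rightarrow> real) \<Rightarrow> ('n \<Rightarrow> 'm \<Rightarrow> real^'m \<Rightarrow> real)
   \<Rightarrow> 'n \<Rightarrow> (real^'m \<Rightarrow> real) \<Rightarrow> real^'m \<Rightarrow> real" where
  "conn c rho i g x = (\<Sum>a\<in>UNIV. rho i a x * dU a g x)
      + g x * ((\<Sum>k\<in>UNIV. c k i k x) + (\<Sum>a\<in>UNIV. dU a (rho i a) x))"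

text \<open>Modular form phi_|sigma| for sigma = f sigma_0 (f nowhere zero): the components phi_i
  with nabla_{e_i} sigma = phi_i sigma.  (Independent of the sign of the representative.)\<close>
definition modular_form ::
  "('n::finite \<Rightarrow> 'n \<Rightarrow> 'n \<Rightarrow> real^'m::finite \<Rightarrow> real) \<Rightarrow> ('n \<Rightarrow> 'm \<Rightarrow> real^'m \<Rightarrow> real)
   \<Rightarrow> (real^'m \<Rightarrow> real) \<Rightarrow> 'n \<Rightarrow> real^'m \<Rightarrow> real" where
  "modular_form c rho f i x = (THE phi. conn c rho i f x = phi * f x)"

definition vlift :: "('n::finite \<Rightarrow> real^'m::finite \<Rightarrow> real) \<Rightarrow> (real^'m) \<times> (real^'n) \<Rightarrow> (real^'m) \<times> (real^'n)" where
  "vlift alpha p = (0, \<chi> i. alpha i (fst p))"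

definition vf_apply :: "('a::euclidean_space \<Rightarrow> 'a) \<Rightarrow> ('a \<Rightarrow> real) \<Rightarrow> 'a \<Rightarrow> real" where
  "vf_apply X F p = frechet_derivative F (at p) (X p)"

text \<open>Divergence with respect to the density Omega = g |dy^1 ... dy^N| (g > 0) in coordinates y:
  L_X Omega = div_Omega(X) Omega, i.e. div_Omega X = (1/g) sum_alpha d(g X^alpha)/dy^alpha.\<close>
definition div_density :: "('a::euclidean_space \<Rightarrow> real) \<Rightarrow> ('a \<Rightarrow> 'a) \<Rightarrow> 'a \<Rightarrow> real" where
  "div_density g X p = (\<Sum>b\<in>Basis. partial b (\<lambda>q. g q * (X q \<bullet> b)) p) / g p"

end

theory Submission
  imports Defs
begin

text \<open>The density is |f| |d\<xi> dx|, so by the Leibniz rule its divergence of X_H is the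
  Euclidean divergence of X_H plus X_H(|f|)/|f| = \<rho>^a_i (\<partial>_a f / f) \<partial>H/\<partial>\<xi>_i.
  In the Euclidean divergence all second derivatives of H cancel: the terms
  c^k_ij \<xi>_k \<partial>^2H/\<partial>\<xi>_i\<partial>\<xi>_j because c is skew in i and j, and the two terms
  \<rho>^a_i \<partial>^2H/\<partial>x^a\<partial>\<xi>_i by symmetry of mixed partials
  (Schwarz). What remains is (c^k_ik + \<partial>_a \<rho>^a_i) \<partial>H/\<partial>\<xi>_i,
  which together with the first term gives \<phi>_i \<partial>H/\<partial>\<xi>_i = \<phi>^v(H).\<close>

lemma linear_frechet_derivative:
  assumes "F differentiable (at p)"
  shows "linear (frechet_derivative F (at p))"
  using assms frechet_derivative_works has_derivative_linear by blast

lemma partial_zero: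
  assumes "F differentiable (at p)"
  shows "partial 0 F p = 0"
  unfolding partial_def using linear_0[OF linear_frechet_derivative[OF assms]] .

lemma partial_mult:
  fixes F G :: "'a::euclidean_space \<Rightarrow> real"
  assumes "F differentiable (at p)" "G differentiable (at p)"
  shows "partial w (\<lambda>q. F q * G q) p = partial w F p * G p + F p * partial w G p"
  using frechet_derivative_at[OF has_derivative_mult[OF assms[unfolded frechet_derivative_works]]]
  unfolding partial_def by (metis add.commute)

lemma partial_diff:
  fixes F G :: "'a::euclidean_space \<Rightarrow> real"
  assumes "F differentiable (at p)" "G differentiable (at p)"
  shows "partial w (\<lambda>q. F q - G q) p = partial w F p - partial w G p"
  using frechet_derivative_at[OF has_derivative_diff[OF assms[unfolded frechet_derivative_works]]]
  unfolding partial_def by metis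

lemma partial_sum:
  fixes F :: "'i \<Rightarrow> 'a::euclidean_space \<Rightarrow> real"
  assumes "\<And>i. i \<in> I \<Longrightarrow> F i differentiable (at p)"
  shows "partial w (\<lambda>q. \<Sum>i\<in>I. F i q) p = (\<Sum>i\<in>I. partial w (F i) p)"
proof -
  have "((\<lambda>q. \<Sum>i\<in>I. F i q) has_derivative (\<lambda>h. \<Sum>i\<in>I. frechet_derivative (F i) (at p) h)) (at p)"
    using assms by (intro has_derivative_sum) (simp add: frechet_derivative_works)
  from frechet_derivative_at[OF this] show ?thesis
    unfolding partial_def by metis
qed

lemma frechet_derivative_eq_sum_partial:
  fixes F :: "'a::euclidean_space \<Rightarrow> real"
  assumes "F differentiable (at p)"
  shows "frechet_derivative F (at p) w = (\<Sum>b\<in>Basis. (w \<bullet> b) * partial b F p)"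
proof -
  note l = linear_frechet_derivative[OF assms]
  have "frechet_derivative F (at p) w = frechet_derivative F (at p) (\<Sum>b\<in>Basis. (w \<bullet> b) *\<^sub>R b)"
    by (simp add: euclidean_representation)
  then show ?thesis
    by (simp add: linear_sum[OF l] linear_scale[OF l] partial_def)
qed

lemma has_real_derivative_partial_along_line:
  fixes F :: "'a::euclidean_space \<Rightarrow> real"
  assumes "F differentiable (at (q + t *\<^sub>R w))"
  shows "((\<lambda>s. F (q + s *\<^sub>R w)) has_real_derivative partial w F (q + t *\<^sub>R w)) (at t)"
proof -
  have "((\<lambda>s. q + s *\<^sub>R w) has_derivative (\<lambda>s. s *\<^sub>R w)) (at t)"
    by (auto intro!: derivative_eq_intros)
  from has_derivative_compose[OF this assms[unfolded frechet_derivative_works]]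
  have "((\<lambda>s. F (q + s *\<^sub>R w)) has_derivative
      (\<lambda>s. frechet_derivative F (at (q + t *\<^sub>R w)) (s *\<^sub>R w))) (at t)" .
  moreover have "(\<lambda>s. frechet_derivative F (at (q + t *\<^sub>R w)) (s *\<^sub>R w)) = (*) (partial w F (q + t *\<^sub>R w))"
    using linear_scale[OF linear_frechet_derivative[OF assms]] by (auto simp: partial_def mult.commute)
  ultimately show ?thesis
    unfolding has_field_derivative_def by simp
qed

definition second_difference :: "('a::real_vector \<Rightarrow> real) \<Rightarrow> 'a \<Rightarrow> 'a \<Rightarrow> 'a \<Rightarrow> real \<Rightarrow> real" where
  "second_difference F p u v h = F (p + h *\<^sub>R u + h *\<^sub>R v) - F (p + h *\<^sub>R u) - F (p + h *\<^sub>R v) + F p"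

lemma second_difference_commute: "second_difference F p u v h = second_difference F p v u h"
  unfolding second_difference_def by (simp add: add_ac)

text \<open>Two applications of the one-dimensional mean value theorem, first along u to the
  difference of F on two parallel segments, then along v.\<close>
lemma second_difference_mean_value:
  fixes F :: "'a::euclidean_space \<Rightarrow> real"
  assumes h: "h > 0"
    and rect: "\<And>s t. 0 \<le> s \<Longrightarrow> s \<le> h \<Longrightarrow> 0 \<le> t \<Longrightarrow> t \<le> h \<Longrightarrow> p + s *\<^sub>R u + t *\<^sub>R v \<in> S"
    and dF: "\<And>q. q \<in> S \<Longrightarrow> F differentiable (at q)"
    and dFu: "\<And>q. q \<in> S \<Longrightarrow> partial u F differentiable (at q)"
  obtains s t where "0 \<le> s" "s \<le> h" "0 \<le> t" "t \<le> h"
    "second_difference F p u v h = h * h * partial v (partial u F) (p + s *\<^sub>R u + t *\<^sub>R v)"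
proof -
  define g where "g s = F ((p + h *\<^sub>R v) + s *\<^sub>R u) - F (p + s *\<^sub>R u)" for s
  have "DERIV g s :> partial u F ((p + h *\<^sub>R v) + s *\<^sub>R u) - partial u F (p + s *\<^sub>R u)"
    if "0 \<le> s" "s \<le> h" for s
    using rect[OF that, of h] rect[OF that, of 0] h unfolding g_def
    by (intro DERIV_diff has_real_derivative_partial_along_line dF) (auto simp: algebra_simps)
  from MVT2[OF h this] obtain s where s: "0 < s" "s < h"
    and eq_s: "g h - g 0 = h * (partial u F ((p + h *\<^sub>R v) + s *\<^sub>R u) - partial u F (p + s *\<^sub>R u))"
    by auto
  have "DERIV (\<lambda>t. partial u F ((p + s *\<^sub>R u) + t *\<^sub>R v)) t :> partial v (partial u F) ((p + s *\<^sub>R u) + t *\<^sub>R v)"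
    if "0 \<le> t" "t \<le> h" for t
    using rect[of s t] s that by (intro has_real_derivative_partial_along_line dFu) auto
  from MVT2[OF h this] obtain t where t: "0 < t" "t < h"
    and eq_t: "partial u F ((p + s *\<^sub>R u) + h *\<^sub>R v) - partial u F ((p + s *\<^sub>R u) + 0 *\<^sub>R v)
       = h * partial v (partial u F) ((p + s *\<^sub>R u) + t *\<^sub>R v)"
    by auto
  show ?thesis
    by (rule that[of s t]) (use s t eq_s eq_t in \<open>auto simp: g_def second_difference_def algebra_simps\<close>)
qed

lemma tendsto_second_difference:
  fixes F :: "'a::euclidean_space \<Rightarrow> real"
  assumes S: "open S" "p \<in> S"
    and dF: "\<And>q. q \<in> S \<Longrightarrow> F differentiable (at q)"
    and dFu: "\<And>q. q \<in> S \<Longrightarrow> partial u F differentiable (at q)"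
    and cont: "continuous_on S (partial v (partial u F))"
  shows "((\<lambda>h. second_difference F p u v h / (h * h)) \<longlongrightarrow> partial v (partial u F) p) (at_right 0)"
proof (rule tendstoI)
  fix e :: real assume "e > 0"
  let ?D = "partial v (partial u F)"
  have "isCont ?D p" using cont S continuous_on_eq_continuous_at by blast
  with \<open>e > 0\<close> obtain \<delta> where "\<delta> > 0" and \<delta>: "\<And>q. dist q p < \<delta> \<Longrightarrow> dist (?D q) (?D p) < e"
    unfolding continuous_at_eps_delta by blast
  obtain r where "r > 0" "ball p r \<subseteq> S" using S open_contains_ball by blast
  define d where "d = min \<delta> r / (norm u + norm v + 1)"
  have "d > 0" using \<open>\<delta> > 0\<close> \<open>r > 0\<close> unfolding d_def by (simp add: add_nonneg_pos)
  have near: "dist (p + s *\<^sub>R u + t *\<^sub>R v) p < min \<delta> r"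
    if "0 \<le> s" "s \<le> h" "0 \<le> t" "t \<le> h" "h < d" for s t h
  proof -
    have "dist (p + s *\<^sub>R u + t *\<^sub>R v) p \<le> s * norm u + t * norm v"
      using norm_triangle_ineq[of "s *\<^sub>R u" "t *\<^sub>R v"] that by (simp add: dist_norm)
    also have "\<dots> \<le> h * (norm u + norm v)"
      using that by (simp add: distrib_left add_mono mult_right_mono)
    also have "\<dots> \<le> h * (norm u + norm v + 1)" using that by (simp add: mult_left_mono)
    also have "\<dots> < min \<delta> r"
      using that \<open>d > 0\<close> by (simp add: d_def pos_less_divide_eq add_nonneg_pos)
    finally show ?thesis .
  qed
  have "dist (second_difference F p u v h / (h * h)) (?D p) < e" if "0 < h" "h < d" for h
  proof -
    have rect: "p + s *\<^sub>R u + t *\<^sub>R v \<in> S" if "0 \<le> s" "s \<le> h" "0 \<le> t" "t \<le> h" for s t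
      using near[OF that \<open>h < d\<close>] \<open>ball p r \<subseteq> S\<close> by (auto simp: dist_commute)
    obtain s t where "0 \<le> s" "s \<le> h" "0 \<le> t" "t \<le> h"
      and eq: "second_difference F p u v h = h * h * ?D (p + s *\<^sub>R u + t *\<^sub>R v)"
      using second_difference_mean_value[of h p u v S F] \<open>0 < h\<close> rect dF dFu by blast
    with \<open>0 < h\<close> \<open>h < d\<close> near \<delta> show ?thesis by simp
  qed
  then show "\<forall>\<^sub>F h in at_right 0. dist (second_difference F p u v h / (h * h)) (?D p) < e"
    unfolding eventually_at_right_field using \<open>d > 0\<close> by blast
qed

lemma partial_commute:
  fixes F :: "'a::euclidean_space \<Rightarrow> real"
  assumes "open S" "p \<in> S"
    and "\<And>q. q \<in> S \<Longrightarrow> F differentiable (at q)"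
    and "\<And>q. q \<in> S \<Longrightarrow> partial u F differentiable (at q)"
    and "\<And>q. q \<in> S \<Longrightarrow> partial v F differentiable (at q)"
    and "continuous_on S (partial v (partial u F))"
    and "continuous_on S (partial u (partial v F))"
  shows "partial v (partial u F) p = partial u (partial v F) p"
proof -
  have "((\<lambda>h. second_difference F p u v h / (h * h)) \<longlongrightarrow> partial v (partial u F) p) (at_right 0)"
    by (rule tendsto_second_difference) (use assms in auto)
  moreover have "((\<lambda>h. second_difference F p u v h / (h * h)) \<longlongrightarrow> partial u (partial v F) p) (at_right 0)"
    unfolding second_difference_commute[of F p u v]
    by (rule tendsto_second_difference) (use assms in auto)
  ultimately show ?thesis
    using tendsto_unique trivial_limit_at_right_real by blast
qed

lemma smooth_on_open: "smooth_on S F \<Longrightarrow> open S"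
  by (erule smooth_on.cases) blast

lemma smooth_on_differentiable: "smooth_on S F \<Longrightarrow> p \<in> S \<Longrightarrow> F differentiable (at p)"
  by (erule smooth_on.cases) (auto simp: differentiable_on_eq_differentiable_at)

lemma smooth_on_partial: "smooth_on S F \<Longrightarrow> b \<in> Basis \<Longrightarrow> smooth_on S (partial b F)"
  by (erule smooth_on.cases) blast

lemma smooth_on_imp_continuous_on: "smooth_on S F \<Longrightarrow> continuous_on S F"
  using smooth_on_open smooth_on_differentiable
  by (blast intro: differentiable_imp_continuous_on differentiable_at_imp_differentiable_on)

lemma smooth_on_partial_commute:
  assumes "smooth_on S F" "p \<in> S" "u \<in> Basis" "v \<in> Basis"
  shows "partial v (partial u F) p = partial u (partial v F) p"
  using assms
  by (intro partial_commute[of S] smooth_on_open smooth_on_differentiable smooth_on_partial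
      smooth_on_imp_continuous_on) auto

lemma smooth_on_dx: "smooth_on S F \<Longrightarrow> smooth_on S (dx a F)"
  unfolding dx_def by (rule smooth_on_partial) (simp_all add: Basis_prod_def)

lemma smooth_on_dxi: "smooth_on S F \<Longrightarrow> smooth_on S (dxi i F)"
  unfolding dxi_def by (rule smooth_on_partial) (simp_all add: Basis_prod_def)

lemma partial_fst_comp:
  assumes "g differentiable (at (fst p))"
  shows "partial w (\<lambda>q. g (fst q)) p = partial (fst w) g (fst p)"
  unfolding partial_def frechet_derivative_at[OF has_derivative_compose[OF
        has_derivative_fst[OF has_derivative_ident] assms[unfolded frechet_derivative_works]], symmetric]
  ..

lemma differentiable_fst_comp:
  "g differentiable (at (fst p)) \<Longrightarrow> (\<lambda>q. g (fst q)) differentiable (at p)"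
  by (rule differentiable_compose) (auto intro: bounded_linear_imp_differentiable bounded_linear_fst)

lemma differentiable_snd_nth:
  "(\<lambda>q::'a::euclidean_space \<times> (real^'n). snd q $ k) differentiable (at p)"
  using bounded_linear_compose[OF bounded_linear_vec_nth[where i=k] bounded_linear_snd]
  by (auto simp: o_def intro: bounded_linear_imp_differentiable)

lemma has_real_derivative_abs:
  assumes "(y::real) \<noteq> 0"
  shows "(abs has_real_derivative sgn y) (at y)"
proof (cases "y > 0")
  case True
  have "(abs has_real_derivative 1) (at y)"
    by (rule has_field_derivative_transform_within_open[where S="{0<..}", OF DERIV_ident])
      (use True in auto)
  with True show ?thesis by simp
next
  case False
  with assms have "y < 0" by simp
  have "(abs has_real_derivative - 1) (at y)"
    by (rule has_field_derivative_transform_within_open[where S="{..<0}", OF DERIV_minus[OF DERIV_ident]])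
      (use \<open>y < 0\<close> in auto)
  with \<open>y < 0\<close> show ?thesis by simp
qed

lemma partial_abs_fst_comp:
  fixes g :: "'a::euclidean_space \<Rightarrow> real"
  assumes "g differentiable (at (fst p))" "g (fst p) \<noteq> 0"
  shows "partial w (\<lambda>q. \<bar>g (fst q)\<bar>) p = sgn (g (fst p)) * partial (fst w) g (fst p)"
  unfolding partial_def frechet_derivative_at[OF has_derivative_compose[OF
        has_derivative_compose[OF has_derivative_fst[OF has_derivative_ident]
          assms(1)[unfolded frechet_derivative_works]]
        has_real_derivative_abs[OF assms(2), unfolded has_field_derivative_def]], symmetric]
  by simp

lemma partial_snd_nth:
  "partial w (\<lambda>q::'a::euclidean_space \<times> (real^'n). snd q $ k) p = snd w $ k"
proof -
  have "bounded_linear (\<lambda>q::'a \<times> (real^'n). snd q $ k)"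
    using bounded_linear_compose[OF bounded_linear_vec_nth[where i=k] bounded_linear_snd] by (simp add: o_def)
  from frechet_derivative_at[OF bounded_linear.has_derivative[OF this has_derivative_ident]]
  show ?thesis
    unfolding partial_def by metis
qed

lemma sum_Basis_vec:
  fixes g :: "real^'n \<Rightarrow> 'c::comm_monoid_add"
  shows "sum g Basis = (\<Sum>i\<in>UNIV. g (axis i 1))"
proof -
  have "inj (\<lambda>i::'n. axis i (1::real))" by (auto intro!: injI simp: axis_eq_axis)
  moreover have "(Basis :: (real^'n) set) = range (\<lambda>i. axis i 1)"
    unfolding Basis_vec_def by auto
  ultimately show ?thesis by (metis (no_types, lifting) sum.reindex comp_apply sum.cong)
qed

lemma sum_Basis_prod:
  fixes g :: "'a::euclidean_space \<times> 'b::euclidean_space \<Rightarrow> 'c::comm_monoid_add"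
  shows "sum g Basis = (\<Sum>u\<in>Basis. g (u, 0)) + (\<Sum>v\<in>Basis. g (0, v))"
proof -
  have "inj_on (\<lambda>u. (u::'a, 0::'b)) Basis" "inj_on (\<lambda>u. (0::'a, u::'b)) Basis"
    by (auto intro!: inj_onI)
  then show ?thesis
    unfolding Basis_prod_def by (subst sum.union_disjoint) (auto simp: sum.reindex)
qed
lemma sum_Basis_prod_vec:
  fixes g :: "(real^'m) \<times> (real^'n) \<Rightarrow> 'c::comm_monoid_add"
  shows "sum g Basis = (\<Sum>a\<in>UNIV. g (axis a 1, 0)) + (\<Sum>i\<in>UNIV. g (0, axis i 1))"
  by (simp add: sum_Basis_prod sum_Basis_vec)

lemma vf_apply_eq_sum_dx_dxi:
  fixes F :: "(real^'m) \<times> (real^'n) \<Rightarrow> real"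
  assumes "F differentiable (at p)"
  shows "vf_apply X F p = (\<Sum>a\<in>UNIV. fst (X p) $ a * dx a F p) + (\<Sum>i\<in>UNIV. snd (X p) $ i * dxi i F p)"
  unfolding vf_apply_def frechet_derivative_eq_sum_partial[OF assms] sum_Basis_prod_vec
  by (simp add: dx_def dxi_def inner_axis inner_Pair_0)

lemma vf_apply_vlift:
  assumes "F differentiable (at p)"
  shows "vf_apply (vlift \<alpha>) F p = (\<Sum>i\<in>UNIV. \<alpha> i (fst p) * dxi i F p)"
  unfolding vf_apply_eq_sum_dx_dxi[OF assms] by (simp add: vlift_def)

definition divergence :: "('a::euclidean_space \<Rightarrow> 'a) \<Rightarrow> 'a \<Rightarrow> real" where
  "divergence X p = (\<Sum>b\<in>Basis. partial b (\<lambda>q. X q \<bullet> b) p)"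

lemma div_density_eq_divergence:
  assumes "w differentiable (at p)" "w p \<noteq> 0"
    and "\<And>b. b \<in> Basis \<Longrightarrow> (\<lambda>q. X q \<bullet> b) differentiable (at p)"
  shows "div_density w X p = divergence X p + vf_apply X w p / w p"
proof -
  have "(\<Sum>b\<in>Basis. partial b (\<lambda>q. w q * (X q \<bullet> b)) p)
      = vf_apply X w p + w p * divergence X p"
    using assms
    by (simp add: partial_mult sum.distrib sum_distrib_left divergence_def vf_apply_def
        frechet_derivative_eq_sum_partial mult.commute)
  then show ?thesis
    using assms(2) unfolding div_density_def by (simp add: field_simps)
qed

lemma sum_skew_sym_eq_zero:
  fixes A S :: "'i \<Rightarrow> 'i \<Rightarrow> real"
  assumes "\<And>i j. A i j = - A j i" "\<And>i j. S i j = S j i"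
  shows "(\<Sum>i\<in>I. \<Sum>j\<in>I. A i j * S i j) = 0"
proof -
  have "(\<Sum>i\<in>I. \<Sum>j\<in>I. A i j * S i j) = (\<Sum>j\<in>I. \<Sum>i\<in>I. A i j * S i j)"
    by (rule sum.swap)
  also have "\<dots> = (\<Sum>j\<in>I. \<Sum>i\<in>I. - (A j i * S j i))"
    by (intro sum.cong refl) (metis assms mult_minus_left)
  also have "\<dots> = - (\<Sum>j\<in>I. \<Sum>i\<in>I. A j i * S j i)"
    by (simp only: sum_negf)
  finally show ?thesis by simp
qed

lemma Basis_prod_vec_cases:
  assumes "b \<in> (Basis :: ((real^'m) \<times> (real^'n)) set)"
  obtains a where "b = (axis a 1, 0)" | j where "b = (0, axis j 1)"
  using assms unfolding Basis_prod_def Basis_vec_def by auto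

lemma inner_ham_vf_dx:
  "ham_vf c rho H q \<bullet> (axis a 1, 0) = (\<Sum>i\<in>UNIV. rho i a (fst q) * dxi i H q)"
  by (simp add: ham_vf_def inner_axis)

lemma inner_ham_vf_dxi:
  "ham_vf c rho H q \<bullet> (0, axis j 1) = (\<Sum>i\<in>UNIV. \<Sum>k\<in>UNIV. c k i j (fst q) * snd q $ k * dxi i H q)
     - (\<Sum>a\<in>UNIV. rho j a (fst q) * dx a H q)"
  by (simp add: ham_vf_def inner_axis)

lemma differentiable_inner_ham_vf:
  assumes "\<And>k i j. c k i j differentiable (at (fst p))" "\<And>i a. rho i a differentiable (at (fst p))"
    and "\<And>a. dx a H differentiable (at p)" "\<And>i. dxi i H differentiable (at p)"
    and "b \<in> Basis"
  shows "(\<lambda>q. ham_vf c rho H q \<bullet> b) differentiable (at p)"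
  using assms(5)
proof (cases rule: Basis_prod_vec_cases)
  case (1 a)
  show ?thesis
    unfolding 1 inner_ham_vf_dx using assms(1-4)
    by (auto intro!: differentiable_sum differentiable_mult differentiable_fst_comp)
next
  case (2 j)
  show ?thesis
    unfolding 2 inner_ham_vf_dxi using assms(1-4)
    by (auto intro!: differentiable_sum differentiable_mult differentiable_diff differentiable_fst_comp
        differentiable_snd_nth)
qed

lemma modular_form_eq:
  assumes "f x \<noteq> 0"
  shows "modular_form c rho f i x
    = (\<Sum>a\<in>UNIV. rho i a x * dU a f x) / f x + (\<Sum>k\<in>UNIV. c k i k x) + (\<Sum>a\<in>UNIV. dU a (rho i a) x)"
  unfolding modular_form_def
  by (rule the_equality) (use assms in \<open>auto simp: conn_def field_simps\<close>)

lemma partial_dx_inner_ham_vf: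
  assumes "\<And>i a. rho i a differentiable (at (fst p))" "\<And>i. dxi i H differentiable (at p)"
  shows "partial (axis a 1, 0) (\<lambda>q. ham_vf c rho H q \<bullet> (axis a 1, 0)) p
    = (\<Sum>i\<in>UNIV. dU a (rho i a) (fst p) * dxi i H p + rho i a (fst p) * dx a (dxi i H) p)"
  using assms unfolding inner_ham_vf_dx dU_def dx_def dxi_def
  by (simp add: differentiable_fst_comp partial_mult partial_sum partial_fst_comp)

lemma partial_dxi_inner_ham_vf:
  assumes "\<And>k i j. c k i j differentiable (at (fst p))" "\<And>i a. rho i a differentiable (at (fst p))"
    and "\<And>a. dx a H differentiable (at p)" "\<And>i. dxi i H differentiable (at p)"
  shows "partial (0, axis j 1) (\<lambda>q. ham_vf c rho H q \<bullet> (0, axis j 1)) p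
    = (\<Sum>i\<in>UNIV. c j i j (fst p) * dxi i H p)
      + (\<Sum>i\<in>UNIV. \<Sum>k\<in>UNIV. c k i j (fst p) * snd p $ k * dxi j (dxi i H) p)
      - (\<Sum>a\<in>UNIV. rho j a (fst p) * dxi j (dx a H) p)"
proof -
  have "partial (0, axis j 1) (\<lambda>q. ham_vf c rho H q \<bullet> (0, axis j 1)) p
    = (\<Sum>i\<in>UNIV. \<Sum>k\<in>UNIV. c k i j (fst p) * axis j 1 $ k * dxi i H p
          + c k i j (fst p) * snd p $ k * dxi j (dxi i H) p)
      - (\<Sum>a\<in>UNIV. rho j a (fst p) * dxi j (dx a H) p)"
    using assms[unfolded dx_def dxi_def] unfolding inner_ham_vf_dxi dx_def dxi_def
    by (simp add: differentiable_fst_comp differentiable_snd_nth partial_mult partial_sum partial_diff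
        partial_fst_comp partial_zero partial_snd_nth)
  moreover have "(\<Sum>k\<in>UNIV. c k i j (fst p) * axis j 1 $ k * dxi i H p) = c j i j (fst p) * dxi i H p" for i
  proof -
    have "c k i j (fst p) * axis j 1 $ k * dxi i H p = (if k = j then c j i j (fst p) * dxi i H p else 0)" for k
      by (simp add: axis_def)
    then show ?thesis by simp
  qed
  ultimately show ?thesis
    by (simp add: sum.distrib)
qed

lemma divergence_ham_vf:
  fixes H :: "(real^'m) \<times> (real^'n) \<Rightarrow> real"
  assumes H: "smooth_on S H" "p \<in> S"
    and dc: "\<And>k i j. c k i j differentiable (at (fst p))"
    and drho: "\<And>i a. rho i a differentiable (at (fst p))"
    and skew: "\<And>k i j. c k i j (fst p) = - c k j i (fst p)"
  shows "divergence (ham_vf c rho H) p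
    = (\<Sum>i\<in>UNIV. ((\<Sum>k\<in>UNIV. c k i k (fst p)) + (\<Sum>a\<in>UNIV. dU a (rho i a) (fst p))) * dxi i H p)"
proof -
  define x where "x = fst p"
  have dH: "dx a H differentiable (at p)" "dxi i H differentiable (at p)" for a i
    using H smooth_on_differentiable smooth_on_dx smooth_on_dxi by blast+
  have dxi_dx: "dxi j (dx a H) p = dx a (dxi j H) p" for a j
    unfolding dx_def dxi_def by (rule smooth_on_partial_commute[OF H]) (simp_all add: Basis_prod_def)
  have dxi_dxi: "dxi j (dxi i H) p = dxi i (dxi j H) p" for i j
    unfolding dxi_def by (rule smooth_on_partial_commute[OF H]) (simp_all add: Basis_prod_def)
  note horizontal = partial_dx_inner_ham_vf[OF drho dH(2), folded x_def]
  note vertical = partial_dxi_inner_ham_vf[OF dc drho dH, folded x_def, unfolded dxi_dx]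
  have skew_term: "(\<Sum>j\<in>UNIV. \<Sum>i\<in>UNIV. \<Sum>k\<in>UNIV. c k i j x * snd p $ k * dxi j (dxi i H) p) = 0"
  proof -
    have "(\<Sum>j\<in>UNIV. \<Sum>i\<in>UNIV. \<Sum>k\<in>UNIV. c k i j x * snd p $ k * dxi j (dxi i H) p)
      = (\<Sum>j\<in>UNIV. \<Sum>i\<in>UNIV. (\<Sum>k\<in>UNIV. c k i j x * snd p $ k) * dxi j (dxi i H) p)"
      by (simp add: sum_distrib_right)
    also have "\<dots> = 0"
    proof (rule sum_skew_sym_eq_zero)
      fix i j
      show "(\<Sum>k\<in>UNIV. c k i j x * snd p $ k) = - (\<Sum>k\<in>UNIV. c k j i x * snd p $ k)"
        unfolding sum_negf[symmetric] x_def by (rule sum.cong) (simp_all add: skew[of _ i j])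
      show "dxi j (dxi i H) p = dxi i (dxi j H) p" by (fact dxi_dxi)
    qed
    finally show ?thesis .
  qed
  have "divergence (ham_vf c rho H) p
    = (\<Sum>a\<in>UNIV. \<Sum>i\<in>UNIV. dU a (rho i a) x * dxi i H p) + (\<Sum>j\<in>UNIV. \<Sum>i\<in>UNIV. c j i j x * dxi i H p)
      + ((\<Sum>a\<in>UNIV. \<Sum>i\<in>UNIV. rho i a x * dx a (dxi i H) p) - (\<Sum>j\<in>UNIV. \<Sum>a\<in>UNIV. rho j a x * dx a (dxi j H) p))"
    unfolding divergence_def sum_Basis_prod_vec horizontal vertical
    by (simp add: sum.distrib sum_subtractf skew_term)
  also have "(\<Sum>a\<in>UNIV. \<Sum>i\<in>UNIV. rho i a x * dx a (dxi i H) p) = (\<Sum>j\<in>UNIV. \<Sum>a\<in>UNIV. rho j a x * dx a (dxi j H) p)"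
    by (rule sum.swap)
  also have "(\<Sum>a\<in>UNIV. \<Sum>i\<in>UNIV. dU a (rho i a) x * dxi i H p)
      = (\<Sum>i\<in>UNIV. (\<Sum>a\<in>UNIV. dU a (rho i a) x) * dxi i H p)"
    by (subst sum.swap) (simp add: sum_distrib_right)
  also have "(\<Sum>j\<in>UNIV. \<Sum>i\<in>UNIV. c j i j x * dxi i H p)
      = (\<Sum>i\<in>UNIV. (\<Sum>k\<in>UNIV. c k i k x) * dxi i H p)"
    by (subst sum.swap) (simp add: sum_distrib_right)
  finally show ?thesis
    unfolding x_def by (simp add: distrib_right sum.distrib)
qed

lemma differentiable_abs_fst_comp:
  fixes g :: "'a::euclidean_space \<Rightarrow> real"
  assumes "g differentiable (at (fst p))" "g (fst p) \<noteq> 0"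
  shows "(\<lambda>q. \<bar>g (fst q)\<bar>) differentiable (at p)"
proof (rule differentiable_compose[of abs])
  show "abs differentiable (at (g (fst p)))"
    using has_real_derivative_abs[OF assms(2)] by (auto simp: differentiable_def has_field_derivative_def)
qed (rule differentiable_fst_comp[OF assms(1)])

lemma vf_apply_ham_vf_abs_fst_comp:
  assumes "f differentiable (at (fst p))" "f (fst p) \<noteq> 0"
  shows "vf_apply (ham_vf c rho H) (\<lambda>q. \<bar>f (fst q)\<bar>) p
    = sgn (f (fst p)) * (\<Sum>i\<in>UNIV. (\<Sum>a\<in>UNIV. rho i a (fst p) * dU a f (fst p)) * dxi i H p)"
proof -
  have "vf_apply (ham_vf c rho H) (\<lambda>q. \<bar>f (fst q)\<bar>) p
      = sgn (f (fst p)) * (\<Sum>a\<in>UNIV. \<Sum>i\<in>UNIV. rho i a (fst p) * dU a f (fst p) * dxi i H p)"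
    unfolding vf_apply_eq_sum_dx_dxi[OF differentiable_abs_fst_comp[OF assms]]
    using assms
    by (simp add: dx_def dxi_def dU_def partial_abs_fst_comp partial_zero ham_vf_def
        sum_distrib_left sum_distrib_right ac_simps)
  also have "\<dots> = sgn (f (fst p)) * (\<Sum>i\<in>UNIV. \<Sum>a\<in>UNIV. rho i a (fst p) * dU a f (fst p) * dxi i H p)"
    by (subst sum.swap) (rule refl)
  finally show ?thesis
    by (simp add: sum_distrib_right)
qed

theorem mainTheorem3:
  fixes U :: "(real^'m::finite) set"
    and c :: "'n::finite \<Rightarrow> 'n \<Rightarrow> 'n \<Rightarrow> real^'m \<Rightarrow> real"
    and rho :: "'n \<Rightarrow> 'm \<Rightarrow> real^'m \<Rightarrow> real"
    and f :: "real^'m \<Rightarrow> real"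
    and H :: "(real^'m) \<times> (real^'n) \<Rightarrow> real"
  assumes "open U"
    and "\<And>k i j. smooth_on U (c k i j)"
    and "\<And>k i j x. x \<in> U \<Longrightarrow> c k i j x = - c k j i x"
    and "\<And>i a. smooth_on U (rho i a)"
    and "smooth_on U f"
    and "\<And>x. x \<in> U \<Longrightarrow> f x \<noteq> 0"
    and "smooth_on (U \<times> UNIV) H"
  shows "\<forall>p \<in> U \<times> UNIV.
           vf_apply (vlift (modular_form c rho f)) H p
           = div_density (\<lambda>q. \<bar>f (fst q)\<bar>) (ham_vf c rho H) p"
proof
  fix p :: "(real^'m) \<times> (real^'n)"
  assume p: "p \<in> U \<times> UNIV"
  have pU: "fst p \<in> U" using p by auto
  then have f: "f (fst p) \<noteq> 0" "f differentiable (at (fst p))"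
    and dc: "\<And>k i j. c k i j differentiable (at (fst p))"
    and drho: "\<And>i a. rho i a differentiable (at (fst p))"
    using assms(2,4-6) smooth_on_differentiable by blast+
  have dH: "H differentiable (at p)" "\<And>a. dx a H differentiable (at p)" "\<And>i. dxi i H differentiable (at p)"
    using assms(7) p smooth_on_differentiable smooth_on_dx smooth_on_dxi by blast+
  have "vf_apply (vlift (modular_form c rho f)) H p
      = (\<Sum>i\<in>UNIV. ((\<Sum>a\<in>UNIV. rho i a (fst p) * dU a f (fst p)) / f (fst p) + (\<Sum>k\<in>UNIV. c k i k (fst p))
          + (\<Sum>a\<in>UNIV. dU a (rho i a) (fst p))) * dxi i H p)"
    by (simp add: vf_apply_vlift dH modular_form_eq f)
  also have "\<dots> = divergence (ham_vf c rho H) p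
      + vf_apply (ham_vf c rho H) (\<lambda>q. \<bar>f (fst q)\<bar>) p / \<bar>f (fst p)\<bar>"
    using divergence_ham_vf[where c=c and rho=rho, OF assms(7) p dc drho assms(3)[OF pU]]
      vf_apply_ham_vf_abs_fst_comp[where c=c and rho=rho and H=H, OF f(2,1)] f(1)
    by (simp add: sgn_if distrib_right sum.distrib flip: sum_divide_distrib)
  also have "\<dots> = div_density (\<lambda>q. \<bar>f (fst q)\<bar>) (ham_vf c rho H) p"
    using f dc drho dH
    by (intro div_density_eq_divergence[symmetric] differentiable_abs_fst_comp differentiable_inner_ham_vf)
      simp_all
  finally show "vf_apply (vlift (modular_form c rho f)) H p = div_density (\<lambda>q. \<bar>f (fst q)\<bar>) (ham_vf c rho H) p" .
qed

end
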